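(* Let $G$ be a split connected reductive group with maximal torus $T$, $M\subseteq G$ a Levi subgroup containing $T$, $\tilde W_M=X^*(T)\rtimes W_M$, and $W^M=\{w\in W:\ell(s_\alpha w)>\ell(w)\ \forall\alpha\in\Delta_M\}$. Let $\tilde z\in\tilde W_M$ and let $r\in\tilde W_M$ be an affine reflection with $\ell(\tilde z)<\ell(r\tilde z)$ (lengths in $\tilde W_M$). Then for every $w^M\in W^M$, $\ell((w^M)^{-1}\tilde zw^M)<\ell((w^M)^{-1}r\tilde zw^M)$ (lengths in $\tilde W$).
   Context: $W=W(G,T)$, $W_M=W(M,T)\subseteq W$, $\Delta_M$ the simple roots of $(M,B\cap M,T)$, $\tilde W=X^*(T)\rtimes W$. Length functions on $\tilde W$ (resp. $\tilde W_M$) are defined via the dominant base alcove $A_0$ of $G$ (resp. the dominant base alcove of $M$), extended to the extended affine Weyl group by $\ell(\tilde w\delta)=\ell(\tilde w)$ for $\delta$ in the stabilizer of the base alcove. Affine reflections are elements $s_\alpha t_{m\alpha}$, $m\in\mathbb Z$. *)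

theory Defs
  imports "HOL-Analysis.Analysis"
begin

text \<open>A split connected reductive group with maximal torus T is encoded by its (reduced)
root datum. V = X^*(T) \<otimes> R is modelled by a Euclidean space; the inner product
identifies V with its dual, so the cocharacter lattice is the dual lattice of X and
coroots are vectors of V paired with characters via the inner product.\<close>

definition is_lattice :: "'v::euclidean_space set \<Rightarrow> bool" where
  "is_lattice X \<longleftrightarrow> (\<exists>B. independent B \<and> span B = UNIV \<and>
      X = {x. \<exists>c::'v \<Rightarrow> int. x = (\<Sum>b\<in>B. of_int (c b) *\<^sub>R b)})"

definition refl :: "('v::real_inner \<Rightarrow> 'v) \<Rightarrow> 'v \<Rightarrow> 'v \<Rightarrow> 'v" where
  "refl cor \<alpha> x = x - (x \<bullet> cor \<alpha>) *\<^sub>R \<alpha>"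

definition corefl :: "('v::real_inner \<Rightarrow> 'v) \<Rightarrow> 'v \<Rightarrow> 'v \<Rightarrow> 'v" where
  "corefl cor \<alpha> y = y - (\<alpha> \<bullet> y) *\<^sub>R cor \<alpha>"

definition reduced_root_datum :: "'v::euclidean_space set \<Rightarrow> 'v set \<Rightarrow> ('v \<Rightarrow> 'v) \<Rightarrow> bool" where
  "reduced_root_datum X R cor \<longleftrightarrow> is_lattice X \<and> finite R \<and> R \<subseteq> X \<and> inj_on cor R \<and>
     (\<forall>\<alpha>\<in>R. (\<forall>x\<in>X. x \<bullet> cor \<alpha> \<in> \<int>) \<and> \<alpha> \<bullet> cor \<alpha> = 2 \<and>
         refl cor \<alpha> ` R = R \<and> corefl cor \<alpha> ` (cor ` R) = cor ` R \<and> 2 *\<^sub>R \<alpha> \<notin> R)"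

inductive_set weyl_group :: "('v::real_inner \<Rightarrow> 'v) \<Rightarrow> 'v set \<Rightarrow> ('v \<Rightarrow> 'v) set"
  for cor R where
  wid: "id \<in> weyl_group cor R"
| wstep: "w \<in> weyl_group cor R \<Longrightarrow> \<alpha> \<in> R \<Longrightarrow> refl cor \<alpha> \<circ> w \<in> weyl_group cor R"

definition ext_affine_weyl :: "('v::real_inner \<Rightarrow> 'v) \<Rightarrow> 'v set \<Rightarrow> 'v set \<Rightarrow> ('v \<Rightarrow> 'v) set" where
  "ext_affine_weyl cor X R = {(\<lambda>x. w x + l) | l w. l \<in> X \<and> w \<in> weyl_group cor R}"

definition affine_refl :: "('v::real_inner \<Rightarrow> 'v) \<Rightarrow> 'v \<Rightarrow> int \<Rightarrow> 'v \<Rightarrow> 'v" where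
  "affine_refl cor \<alpha> m = (\<lambda>x. refl cor \<alpha> (x + of_int m *\<^sub>R \<alpha>))"

text \<open>Positive system determined by a regular vector xi (choice of Borel B \<supseteq> T).\<close>
definition pos_roots :: "'v::real_inner set \<Rightarrow> 'v \<Rightarrow> 'v set" where
  "pos_roots R \<xi> = {\<alpha>\<in>R. 0 < \<alpha> \<bullet> \<xi>}"

definition simple_roots :: "'v::real_inner set \<Rightarrow> 'v set" where
  "simple_roots P = {\<alpha>\<in>P. \<not> (\<exists>\<beta>\<in>P. \<exists>\<gamma>\<in>P. \<alpha> = \<beta> + \<gamma>)}"

text \<open>Root system of the Levi subgroup M = Z_G(S) (centralizer of a subtorus),
S given by (real spans of) cocharacters.\<close>
definition levi_roots :: "'v::real_inner set \<Rightarrow> 'v set \<Rightarrow> 'v set" where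
  "levi_roots R S = {\<alpha>\<in>R. \<forall>y\<in>S. \<alpha> \<bullet> y = 0}"

definition base_alcove :: "('v::real_inner \<Rightarrow> 'v) \<Rightarrow> 'v set \<Rightarrow> 'v set" where
  "base_alcove cor P = {x. \<forall>\<alpha>\<in>P. 0 < x \<bullet> cor \<alpha> \<and> x \<bullet> cor \<alpha> < 1}"

definition separates :: "('v::real_inner \<Rightarrow> 'v) \<Rightarrow> 'v set \<Rightarrow> 'v set \<Rightarrow> 'v \<Rightarrow> int \<Rightarrow> bool" where
  "separates cor A B \<alpha> k \<longleftrightarrow>
     (\<exists>a\<in>A. \<exists>b\<in>B. (a \<bullet> cor \<alpha> - of_int k) * (b \<bullet> cor \<alpha> - of_int k) < 0)"

definition alcove_length :: "('v::real_inner \<Rightarrow> 'v) \<Rightarrow> 'v set \<Rightarrow> ('v \<Rightarrow> 'v) \<Rightarrow> nat" where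
  "alcove_length cor P f =
     card {(\<alpha>, k). \<alpha> \<in> P \<and> separates cor (base_alcove cor P) (f ` base_alcove cor P) \<alpha> k}"

end

theory Submission
  imports Defs
begin

(*
  Twice the length of g equals the number of affine roots f (both signs counted) separating
  a point a of the base alcove from g a, i.e. with f a * f (g a) < 0. If the mirror of an
  affine reflection r does not separate p from q, reflecting q across it gains the two affine
  roots of that mirror, while every other root separating p from q either still separates p
  from r q or is traded for its pullback along r; so the count grows, and conversely.

  A minimal coset representative w maps a into the base alcove of M: positivity on the simple
  coroots of M follows from the length condition, on all positive coroots of M from an
  invariant form, and the upper bound holds because w permutes the coroots. At the point w a
  the hypothesis on z says that the mirror of r does not separate w a from z (w a); the same
  count for G, transported back by w^-1, gives the conclusion.
*)

lemma product_sign_shift: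
  fixes a b c d :: real
  assumes ab: "a * b < 0" and abd: "\<not> a * (b - d) < 0" and cd: "0 \<le> c * d"
  shows "(a - c) * b < 0 \<and> \<not> (a - c) * (b - d) < 0"
proof (cases "0 < a")
  case True
  then have "b < 0" "0 \<le> b - d"
    using ab abd by (auto simp: mult_less_0_iff)
  then have "0 < a - c"
    using True cd by (auto simp: zero_le_mult_iff)
  then show ?thesis
    using \<open>b < 0\<close> \<open>0 \<le> b - d\<close> by (auto simp: mult_less_0_iff)
next
  case False
  then have "a < 0" "0 < b" "b - d \<le> 0"
    using ab abd by (auto simp: mult_less_0_iff)
  then have "a - c < 0"
    using cd by (auto simp: zero_le_mult_iff)
  then show ?thesis
    using \<open>0 < b\<close> \<open>b - d \<le> 0\<close> by (auto simp: mult_less_0_iff)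
qed

lemma mult_neg_transfer:
  fixes p p' q q' :: real
  assumes "p * q < 0" and "0 < p * p'" and "0 < q * q'"
  shows "p' * q' < 0"
proof -
  have "0 < (p * p') * (q * q')"
    using assms(2,3) by simp
  then have "0 < (p * q) * (p' * q')"
    by (simp add: algebra_simps)
  then show ?thesis
    using assms(1) zero_less_mult_iff[of "p * q" "p' * q'"] by linarith
qed

lemma finite_ints_between:
  fixes u v :: real
  shows "finite {k::int. (u - of_int k) * (v - of_int k) < 0}"
proof (rule finite_subset)
  show "{k::int. (u - of_int k) * (v - of_int k) < 0} \<subseteq> {-\<lceil>\<bar>u\<bar> + \<bar>v\<bar>\<rceil>..\<lceil>\<bar>u\<bar> + \<bar>v\<bar>\<rceil>}"
  proof
    fix k :: int
    assume "k \<in> {k. (u - of_int k) * (v - of_int k) < 0}"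
    then have "\<bar>of_int k\<bar> \<le> \<bar>u\<bar> + \<bar>v\<bar>"
      by (auto simp: mult_less_0_iff)
    then have "\<bar>k\<bar> \<le> \<lceil>\<bar>u\<bar> + \<bar>v\<bar>\<rceil>"
      by linarith
    then show "k \<in> {-\<lceil>\<bar>u\<bar> + \<bar>v\<bar>\<rceil>..\<lceil>\<bar>u\<bar> + \<bar>v\<bar>\<rceil>}"
      by (simp add: abs_le_iff)
  qed
qed simp

lemma mult_pos_in_unit_interval:
  fixes u v :: real and n k :: int
  assumes "of_int n < u" "u < of_int n + 1" "of_int n < v" "v < of_int n + 1"
  shows "0 < (u - of_int k) * (v - of_int k)"
proof (cases "k \<le> n")
  case True
  then have "(of_int k :: real) \<le> of_int n"
    by simp
  then show ?thesis
    using assms by (intro mult_pos_pos) auto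
next
  case False
  then have "of_int n + 1 \<le> (of_int k :: real)"
    by linarith
  then show ?thesis
    using assms by (intro mult_neg_neg) auto
qed

lemma inner_refl_eq_inner_corefl: "refl cor \<alpha> x \<bullet> y = x \<bullet> corefl cor \<alpha> y"
  by (simp add: refl_def corefl_def inner_diff_left inner_diff_right algebra_simps)

lemma coreflection_unique:
  fixes C :: "'v::real_inner set"
  assumes "finite C" and "d \<in> C" and \<gamma>d: "\<gamma> \<bullet> d = 2" and \<gamma>e: "\<gamma> \<bullet> e = 2"
    and d: "\<And>y. y \<in> C \<Longrightarrow> y - (\<gamma> \<bullet> y) *\<^sub>R d \<in> C"
    and e: "\<And>y. y \<in> C \<Longrightarrow> y - (\<gamma> \<bullet> y) *\<^sub>R e \<in> C"
  shows "d = e"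
proof (rule ccontr)
  assume "d \<noteq> e"
  \<comment> \<open>The two reflections compose to a transvection whose orbit through d is infinite.\<close>
  have transvection: "y + (\<gamma> \<bullet> y) *\<^sub>R (d - e) \<in> C" if "y \<in> C" for y
  proof -
    have \<gamma>y: "\<gamma> \<bullet> (y - (\<gamma> \<bullet> y) *\<^sub>R e) = - (\<gamma> \<bullet> y)"
      using \<gamma>e by (simp add: inner_diff_right)
    have "y - (\<gamma> \<bullet> y) *\<^sub>R e - (\<gamma> \<bullet> (y - (\<gamma> \<bullet> y) *\<^sub>R e)) *\<^sub>R d \<in> C"
      using d e that by blast
    also have "y - (\<gamma> \<bullet> y) *\<^sub>R e - (\<gamma> \<bullet> (y - (\<gamma> \<bullet> y) *\<^sub>R e)) *\<^sub>R d = y + (\<gamma> \<bullet> y) *\<^sub>R (d - e)"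
      unfolding \<gamma>y by (simp add: algebra_simps)
    finally show ?thesis .
  qed
  have orbit: "d + (2 * real n) *\<^sub>R (d - e) \<in> C" for n
  proof (induction n)
    case 0
    show ?case using \<open>d \<in> C\<close> by simp
  next
    case (Suc n)
    have "\<gamma> \<bullet> (d + (2 * real n) *\<^sub>R (d - e)) = 2"
      using \<gamma>d \<gamma>e by (simp add: inner_add_right inner_diff_right)
    then have "d + (2 * real n) *\<^sub>R (d - e) + 2 *\<^sub>R (d - e) \<in> C"
      using transvection[OF Suc] by simp
    also have "d + (2 * real n) *\<^sub>R (d - e) + 2 *\<^sub>R (d - e) = d + (2 * real (Suc n)) *\<^sub>R (d - e)"
      by (simp add: algebra_simps)
    finally show ?case .
  qed
  have "inj (\<lambda>n::nat. d + (2 * real n) *\<^sub>R (d - e))"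
    using \<open>d \<noteq> e\<close> by (auto intro!: injI)
  moreover have "range (\<lambda>n::nat. d + (2 * real n) *\<^sub>R (d - e)) \<subseteq> C"
    using orbit by auto
  ultimately show False
    using \<open>finite C\<close> finite_subset infinite_UNIV_nat finite_imageD by metis
qed

lemma reflection_invariant_form_sign:
  fixes C :: "'v::real_inner set"
  assumes "finite C" and "u \<in> C" and uv: "u \<bullet> v = 2"
    and refl_C: "(\<lambda>c. c - (v \<bullet> c) *\<^sub>R u) ` C = C"
  shows "0 < x \<bullet> u \<longleftrightarrow> 0 < (\<Sum>c\<in>C. (x \<bullet> c) * (v \<bullet> c))"
proof -
  \<comment> \<open>Reindexing the sum by the reflection s gives 2 B = (x \<bullet> u) N with N > 0.\<close>
  define s where "s c = c - (v \<bullet> c) *\<^sub>R u" for c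
  define B where "B = (\<Sum>c\<in>C. (x \<bullet> c) * (v \<bullet> c))"
  define N where "N = (\<Sum>c\<in>C. (v \<bullet> c) * (v \<bullet> c))"
  have v_s: "v \<bullet> s c = - (v \<bullet> c)" for c
    using uv by (simp add: s_def inner_diff_right inner_commute)
  have "s (s c) = c" for c
    using v_s[of c] by (simp add: s_def)
  then have "inj_on s C"
    by (metis inj_onI)
  then have "B = (\<Sum>c\<in>C. (x \<bullet> s c) * (v \<bullet> s c))"
    using sum.reindex[of s C "\<lambda>c. (x \<bullet> c) * (v \<bullet> c)"] refl_C
    by (simp add: B_def s_def[abs_def])
  also have "\<dots> = (\<Sum>c\<in>C. (x \<bullet> u) * ((v \<bullet> c) * (v \<bullet> c)) - (x \<bullet> c) * (v \<bullet> c))"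
  proof (rule sum.cong)
    fix c
    have x_s: "x \<bullet> s c = x \<bullet> c - (v \<bullet> c) * (x \<bullet> u)"
      by (simp add: s_def inner_diff_right)
    show "(x \<bullet> s c) * (v \<bullet> s c) = (x \<bullet> u) * ((v \<bullet> c) * (v \<bullet> c)) - (x \<bullet> c) * (v \<bullet> c)"
      unfolding x_s v_s by (simp add: algebra_simps)
  qed simp
  also have "\<dots> = (x \<bullet> u) * N - B"
    by (simp add: B_def N_def sum_subtractf sum_distrib_left)
  finally have "2 * B = (x \<bullet> u) * N"
    by simp
  moreover have "(v \<bullet> u) * (v \<bullet> u) \<le> N"
    unfolding N_def using assms(1,2) by (intro member_le_sum) auto
  then have "0 < N"
    using uv by (simp add: inner_commute)
  ultimately show ?thesis
    unfolding B_def by (smt (verit) zero_less_mult_iff)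
qed

lemma positive_on_simple_roots:
  fixes P :: "'v::real_inner set"
  assumes "finite P" and pos: "\<forall>\<alpha>\<in>P. 0 < \<alpha> \<bullet> \<xi>"
    and simple: "\<forall>\<beta>\<in>simple_roots P. 0 < \<beta> \<bullet> y" and "\<gamma> \<in> P"
  shows "0 < \<gamma> \<bullet> y"
proof (rule ccontr)
  define B where "B = {\<delta>\<in>P. \<delta> \<bullet> y \<le> 0}"
  assume "\<not> 0 < \<gamma> \<bullet> y"
  then have "B \<noteq> {}" "finite B"
    using assms(1,4) by (auto simp: B_def)
  then obtain \<delta> where \<delta>: "\<delta> \<in> B" and min: "\<And>\<delta>'. \<delta>' \<in> B \<Longrightarrow> \<not> \<delta>' \<bullet> \<xi> < \<delta> \<bullet> \<xi>"
    using arg_min_if_finite[of B "\<lambda>\<delta>. \<delta> \<bullet> \<xi>"] by blast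
  then have "\<delta> \<notin> simple_roots P"
    using simple by (auto simp: B_def)
  then obtain \<beta>1 \<beta>2 where \<beta>: "\<beta>1 \<in> P" "\<beta>2 \<in> P" "\<delta> = \<beta>1 + \<beta>2"
    using \<delta> by (auto simp: simple_roots_def B_def)
  then have "\<beta>1 \<bullet> \<xi> < \<delta> \<bullet> \<xi>" "\<beta>2 \<bullet> \<xi> < \<delta> \<bullet> \<xi>"
    using pos by (auto simp: inner_add_left)
  then have "\<beta>1 \<notin> B" "\<beta>2 \<notin> B"
    using min by blast+
  then have "0 < \<beta>1 \<bullet> y" "0 < \<beta>2 \<bullet> y"
    using \<beta> by (auto simp: B_def)
  then show False
    using \<delta> \<beta>(3) by (simp add: B_def inner_add_left)
qed

lemma weyl_group_mono:
  assumes "Q \<subseteq> Q'" and "w \<in> weyl_group cor Q"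
  shows "w \<in> weyl_group cor Q'"
  using assms(2)
proof induction
  case wid
  show ?case
    by (rule weyl_group.wid)
next
  case (wstep w \<alpha>)
  then show ?case
    using assms(1) by (blast intro: weyl_group.wstep)
qed

lemma weyl_group_comp_refl:
  assumes "w \<in> weyl_group cor Q" and "\<alpha> \<in> Q"
  shows "w \<circ> refl cor \<alpha> \<in> weyl_group cor Q"
  using assms(1)
proof induction
  case wid
  show ?case
    using weyl_group.wstep[OF weyl_group.wid assms(2)] by simp
next
  case (wstep w \<beta>)
  have "refl cor \<beta> \<circ> (w \<circ> refl cor \<alpha>) \<in> weyl_group cor Q"
    by (rule weyl_group.wstep[OF wstep.IH wstep.hyps(2)])
  then show ?case
    by (simp only: comp_assoc)
qed

lemma ext_affine_weyl_mono:
  assumes "Q \<subseteq> Q'" and "z \<in> ext_affine_weyl cor X Q"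
  shows "z \<in> ext_affine_weyl cor X Q'"
proof -
  obtain l u where "z = (\<lambda>x. u x + l)" "l \<in> X" "u \<in> weyl_group cor Q"
    using assms(2) by (auto simp: ext_affine_weyl_def)
  then show ?thesis
    using weyl_group_mono[OF assms(1)] by (auto simp: ext_affine_weyl_def)
qed

definition affine_root :: "'v::real_inner \<Rightarrow> int \<Rightarrow> 'v \<Rightarrow> real" where
  "affine_root c k = (\<lambda>x. x \<bullet> c - of_int k)"

lemma affine_root_eq_iff: "affine_root c k = affine_root c' k' \<longleftrightarrow> c = c' \<and> k = k'"
proof
  assume eq: "affine_root c k = affine_root c' k'"
  have "k = k'"
    using fun_cong[OF eq, of 0] unfolding affine_root_def by simp
  moreover have "x \<bullet> (c - c') = 0" for x
    using fun_cong[OF eq, of x] \<open>k = k'\<close> unfolding affine_root_def by (simp add: inner_diff_right)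
  then have "c = c'"
    using inner_eq_zero_iff[of "c - c'"] by simp
  ultimately show "c = c' \<and> k = k'"
    by simp
qed simp

lemma affine_root_uminus: "(\<lambda>x. - affine_root c k x) = affine_root (- c) (- k)"
  by (simp add: affine_root_def fun_eq_iff)

lemma card_add_le_of_inj_on_Diff:
  assumes "finite B" and inj: "inj_on g (A - B)" and maps: "g ` (A - B) \<subseteq> B - A - E"
    and E: "E \<subseteq> B - A"
  shows "card A + card E \<le> card B"
proof -
  have fin: "finite (B - A - E)" "finite (B - A)" "finite E"
    using \<open>finite B\<close> E finite_subset by auto
  have le: "card (A - B) \<le> card (B - A - E)"
    by (rule card_inj_on_le[OF inj maps fin(1)])
  have "finite (A - B)"
    by (rule inj_on_finite[OF inj maps fin(1)])
  then have "finite A"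
    using \<open>finite B\<close> by (metis Diff_Diff_Int Diff_subset finite_Diff2 finite_subset)
  have "card (B - A) = card (B - A - E) + card E"
    using card_Diff_subset[OF fin(3) E] card_mono[OF fin(2) E] by simp
  then show ?thesis
    using le card_Int_Diff[OF \<open>finite A\<close>, of B] card_Int_Diff[OF \<open>finite B\<close>, of A]
    by (simp add: Int_commute)
qed

lemma pullback_sign_change:
  fixes f h :: "'v \<Rightarrow> real" and r :: "'v \<Rightarrow> 'v"
  assumes shear: "\<forall>x. f (r x) = f x - t * h x" and pq: "0 < h p * h q"
    and "f p * f q < 0" and "\<not> f p * f (r q) < 0"
  shows "f (r p) * f q < 0 \<and> \<not> f (r p) * f (r q) < 0"
proof -
  have eq: "(t * h p) * (t * h q) = (t * t) * (h p * h q)"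
    by (simp add: algebra_simps)
  have "0 \<le> (t * h p) * (t * h q)"
    unfolding eq using pq by simp
  then have "(f p - t * h p) * f q < 0 \<and> \<not> (f p - t * h p) * (f q - t * h q) < 0"
    using assms(3,4) shear by (intro product_sign_shift) simp_all
  then show ?thesis
    using shear by simp
qed

lemma card_sign_changes_reflection:
  fixes F :: "('v \<Rightarrow> real) set" and r :: "'v \<Rightarrow> 'v" and h :: "'v \<Rightarrow> real"
  assumes F_r: "\<And>f. f \<in> F \<Longrightarrow> f \<circ> r \<in> F"
    and r_r: "\<And>x. r (r x) = x"
    and h: "h \<in> F" "(\<lambda>x. - h x) \<in> F"
    and h_r: "\<And>x. h (r x) = - h x"
    and shear: "\<And>f. f \<in> F \<Longrightarrow> \<exists>t. \<forall>x. f (r x) = f x - t * h x"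
    and fin: "finite {f \<in> F. f p * f (r q) < 0}"
    and pq: "0 < h p * h q"
  shows "card {f \<in> F. f p * f q < 0} + 2 \<le> card {f \<in> F. f p * f (r q) < 0}"
proof -
  \<comment> \<open>Pullback along r sends each f that stops separating to one that starts separating;
    h and -h start separating.\<close>
  define S1 where "S1 = {f \<in> F. f p * f q < 0}"
  define S2 where "S2 = {f \<in> F. f p * f (r q) < 0}"
  define h' where "h' = (\<lambda>x. - h x)"
  have rr: "f \<circ> r \<circ> r = f" for f :: "'v \<Rightarrow> real"
    using r_r by (simp add: fun_eq_iff)
  have swap: "f \<circ> r \<in> S2 \<and> f \<circ> r \<notin> S1" if f: "f \<in> S1" "f \<notin> S2" for f
  proof -
    obtain t where "\<forall>x. f (r x) = f x - t * h x"
      using shear f(1) by (auto simp: S1_def)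
    from pullback_sign_change[OF this pq] f F_r r_r show ?thesis
      by (simp add: S1_def S2_def)
  qed
  have h_S: "h \<in> S2" "h \<notin> S1" "h' \<in> S2" "h' \<notin> S1"
    using h h_r pq by (auto simp: S1_def S2_def h'_def mult_less_0_iff zero_less_mult_iff)
  have "h \<noteq> h'"
  proof
    assume "h = h'"
    then have "h p = h' p"
      by simp
    then show False
      using pq by (simp add: h'_def)
  qed
  have h_r': "h \<circ> r = h'" "h' \<circ> r = h"
    using h_r by (auto simp: h'_def fun_eq_iff)
  have inj_r: "inj_on (\<lambda>f. f \<circ> r) A" for A :: "('v \<Rightarrow> real) set"
    by (rule inj_onI) (metis rr)
  have maps: "(\<lambda>f. f \<circ> r) ` (S1 - S2) \<subseteq> S2 - S1 - {h, h'}"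
  proof
    fix g
    assume "g \<in> (\<lambda>f. f \<circ> r) ` (S1 - S2)"
    then obtain f where f: "f \<in> S1" "f \<notin> S2" "g = f \<circ> r"
      by blast
    have "f \<noteq> h'" "f \<noteq> h"
      using f(1) h_S by auto
    then have "g \<noteq> h" "g \<noteq> h'"
      using f(3) rr[of f] h_r' by auto
    then show "g \<in> S2 - S1 - {h, h'}"
      using swap f by simp
  qed
  have "finite S2"
    using fin by (simp add: S2_def)
  then have "card S1 + card {h, h'} \<le> card S2"
    using h_S by (intro card_add_le_of_inj_on_Diff[OF _ inj_r maps]) auto
  then show ?thesis
    using \<open>h \<noteq> h'\<close> by (simp add: S1_def S2_def)
qed

locale root_datum =
  fixes X R :: "'v::euclidean_space set" and cor :: "'v \<Rightarrow> 'v"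
  assumes datum: "reduced_root_datum X R cor"
begin

lemma finite_roots: "finite R"
  and inj_on_cor: "inj_on cor R"
  and root_coroot: "\<alpha> \<in> R \<Longrightarrow> \<alpha> \<bullet> cor \<alpha> = 2"
  and refl_roots: "\<alpha> \<in> R \<Longrightarrow> refl cor \<alpha> ` R = R"
  and corefl_coroots: "\<alpha> \<in> R \<Longrightarrow> corefl cor \<alpha> ` cor ` R = cor ` R"
  and lattice_coroot_int: "x \<in> X \<Longrightarrow> c \<in> cor ` R \<Longrightarrow> x \<bullet> c \<in> \<int>"
  and roots_lattice: "R \<subseteq> X"
  using datum by (auto simp: reduced_root_datum_def)

lemma root_coroot_int: "\<alpha> \<in> R \<Longrightarrow> c \<in> cor ` R \<Longrightarrow> \<alpha> \<bullet> c \<in> \<int>"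
  using lattice_coroot_int roots_lattice by blast

lemma refl_refl: "\<alpha> \<in> R \<Longrightarrow> refl cor \<alpha> (refl cor \<alpha> x) = x"
  using root_coroot[of \<alpha>] by (simp add: refl_def inner_diff_left algebra_simps)

lemma corefl_corefl: "\<alpha> \<in> R \<Longrightarrow> corefl cor \<alpha> (corefl cor \<alpha> y) = y"
  using root_coroot[of \<alpha>] by (simp add: corefl_def inner_diff_right algebra_simps)

lemma refl_self: "\<alpha> \<in> R \<Longrightarrow> refl cor \<alpha> \<alpha> = - \<alpha>"
  using root_coroot[of \<alpha>] by (simp add: refl_def scaleR_2)

lemma cor_refl:
  assumes "\<alpha> \<in> R" and "\<gamma> \<in> R"
  shows "cor (refl cor \<alpha> \<gamma>) = corefl cor \<alpha> (cor \<gamma>)"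
proof (rule coreflection_unique)
  let ?\<delta> = "refl cor \<alpha> \<gamma>"
  have \<delta>: "?\<delta> \<in> R"
    using assms refl_roots by blast
  show "finite (cor ` R)" "cor ?\<delta> \<in> cor ` R"
    using finite_roots \<delta> by auto
  show "?\<delta> \<bullet> cor ?\<delta> = 2"
    using root_coroot[OF \<delta>] .
  show "?\<delta> \<bullet> corefl cor \<alpha> (cor \<gamma>) = 2"
    using assms by (simp add: inner_refl_eq_inner_corefl corefl_corefl root_coroot)
  fix y
  assume y: "y \<in> cor ` R"
  show "y - (?\<delta> \<bullet> y) *\<^sub>R cor ?\<delta> \<in> cor ` R"
    using corefl_coroots[OF \<delta>] y by (auto simp: corefl_def)
  have "corefl cor \<alpha> (corefl cor \<gamma> (corefl cor \<alpha> y))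
      = corefl cor \<alpha> (corefl cor \<alpha> y) - (\<gamma> \<bullet> corefl cor \<alpha> y) *\<^sub>R corefl cor \<alpha> (cor \<gamma>)"
    by (simp add: corefl_def inner_diff_right algebra_simps)
  also have "\<dots> = y - (?\<delta> \<bullet> y) *\<^sub>R corefl cor \<alpha> (cor \<gamma>)"
    using assms(1) by (simp add: corefl_corefl inner_refl_eq_inner_corefl)
  finally have "corefl cor \<alpha> (corefl cor \<gamma> (corefl cor \<alpha> y)) = y - (?\<delta> \<bullet> y) *\<^sub>R corefl cor \<alpha> (cor \<gamma>)" .
  moreover have "corefl cor \<alpha> (corefl cor \<gamma> (corefl cor \<alpha> y)) \<in> cor ` R"
    using corefl_coroots assms y by blast
  ultimately show "y - (?\<delta> \<bullet> y) *\<^sub>R corefl cor \<alpha> (cor \<gamma>) \<in> cor ` R"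
    by simp
qed

lemma cor_uminus: "\<alpha> \<in> R \<Longrightarrow> cor (- \<alpha>) = - cor \<alpha>"
  using cor_refl[of \<alpha> \<alpha>] root_coroot[of \<alpha>] by (simp add: refl_self corefl_def scaleR_2)

definition closed_subsystem :: "'v set \<Rightarrow> bool" where
  "closed_subsystem Q \<longleftrightarrow> Q \<subseteq> R \<and> (\<forall>\<alpha>\<in>Q. \<forall>\<gamma>\<in>Q. refl cor \<alpha> \<gamma> \<in> Q)"

lemma closed_subsystem_roots: "closed_subsystem R"
  using refl_roots by (auto simp: closed_subsystem_def)

lemma closed_subsystem_levi_roots: "closed_subsystem (levi_roots R S)"
  using refl_roots by (auto simp: closed_subsystem_def levi_roots_def refl_def inner_diff_left)

context
  fixes Q assumes Q: "closed_subsystem Q"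
begin

lemma closed_subsystem_subset: "\<alpha> \<in> Q \<Longrightarrow> \<alpha> \<in> R"
  using Q by (auto simp: closed_subsystem_def)

lemma closed_subsystem_uminus:
  assumes "\<alpha> \<in> Q"
  shows "- \<alpha> \<in> Q"
proof -
  have "refl cor \<alpha> \<alpha> \<in> Q"
    using Q assms by (simp add: closed_subsystem_def)
  then show ?thesis
    using refl_self closed_subsystem_subset assms by simp
qed

lemma closed_subsystem_uminus_coroot:
  assumes "c \<in> cor ` Q"
  shows "- c \<in> cor ` Q"
proof -
  obtain \<gamma> where "\<gamma> \<in> Q" "c = cor \<gamma>"
    using assms by blast
  then have "- c = cor (- \<gamma>)" "- \<gamma> \<in> Q"
    using cor_uminus closed_subsystem_subset closed_subsystem_uminus by auto
  then show ?thesis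
    by blast
qed

lemma closed_subsystem_corefl:
  assumes "\<alpha> \<in> Q" and "c \<in> cor ` Q"
  shows "corefl cor \<alpha> c \<in> cor ` Q"
proof -
  obtain \<gamma> where \<gamma>: "\<gamma> \<in> Q" "c = cor \<gamma>"
    using assms by blast
  then have "corefl cor \<alpha> c = cor (refl cor \<alpha> \<gamma>)"
    using assms cor_refl closed_subsystem_subset by simp
  moreover have "refl cor \<alpha> \<gamma> \<in> Q"
    using Q assms \<gamma> by (simp add: closed_subsystem_def)
  ultimately show ?thesis
    by blast
qed

lemma closed_subsystem_int:
  assumes "\<alpha> \<in> R" and "c \<in> cor ` Q"
  obtains n :: int where "\<alpha> \<bullet> c = of_int n"
proof -
  have "c \<in> cor ` R"
    using assms(2) closed_subsystem_subset by blast
  then have "\<alpha> \<bullet> c \<in> \<int>"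
    using assms(1) root_coroot_int by blast
  then show ?thesis
    using that by (auto elim: Ints_cases)
qed

lemma weyl_group_transpose:
  assumes "w \<in> weyl_group cor Q" and "c \<in> cor ` Q"
  shows "\<exists>c'\<in>cor ` Q. \<forall>x. w x \<bullet> c = x \<bullet> c'"
  using assms
proof (induction arbitrary: c)
  case wid
  then show ?case
    by force
next
  case (wstep w \<alpha>)
  have "corefl cor \<alpha> c \<in> cor ` Q"
    by (rule closed_subsystem_corefl[OF wstep.hyps(2) wstep.prems])
  then obtain c' where "c' \<in> cor ` Q" and "\<forall>x. w x \<bullet> corefl cor \<alpha> c = x \<bullet> c'"
    using wstep.IH by blast
  then show ?case
    by (metis comp_apply inner_refl_eq_inner_corefl)
qed

lemma weyl_group_bij_inv:
  assumes "w \<in> weyl_group cor Q"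
  shows "bij w \<and> inv w \<in> weyl_group cor Q"
  using assms
proof induction
  case wid
  show ?case
    using bij_id inv_id weyl_group.wid by metis
next
  case (wstep w \<alpha>)
  have "refl cor \<alpha> \<circ> refl cor \<alpha> = id"
    using refl_refl[OF closed_subsystem_subset[OF wstep.hyps(2)]] by (simp add: fun_eq_iff)
  then have s: "bij (refl cor \<alpha>)" "inv (refl cor \<alpha>) = refl cor \<alpha>"
    using o_bij inv_unique_comp by auto
  have "inv (refl cor \<alpha> \<circ> w) = inv w \<circ> refl cor \<alpha>"
    using s wstep.IH by (simp add: o_inv_distrib)
  moreover have "inv w \<circ> refl cor \<alpha> \<in> weyl_group cor Q"
    using wstep.IH wstep.hyps(2) by (simp add: weyl_group_comp_refl)
  moreover have "bij (refl cor \<alpha> \<circ> w)"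
    using s wstep.IH bij_comp by blast
  ultimately show ?case
    by (simp add: comp_def)
qed

end

text \<open>Each wall
  is the zero set of exactly two affine roots, f and -f; separating_walls indexes it instead,
  as alcove_length does, by a positive root and an integer.\<close>

definition affine_roots :: "'v set \<Rightarrow> ('v \<Rightarrow> real) set" where
  "affine_roots Q = {affine_root c k | c k. c \<in> cor ` Q}"

definition preserves_affine_roots :: "'v set \<Rightarrow> ('v \<Rightarrow> 'v) \<Rightarrow> bool" where
  "preserves_affine_roots Q g \<longleftrightarrow> (\<forall>f\<in>affine_roots Q. f \<circ> g \<in> affine_roots Q)"

definition separating_roots :: "'v set \<Rightarrow> 'v \<Rightarrow> 'v \<Rightarrow> ('v \<Rightarrow> real) set" where
  "separating_roots Q p q = {f \<in> affine_roots Q. f p * f q < 0}"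

definition separating_walls :: "'v set \<Rightarrow> 'v \<Rightarrow> 'v \<Rightarrow> 'v \<Rightarrow> ('v \<times> int) set" where
  "separating_walls Q \<xi> p q =
    {(\<beta>, k). \<beta> \<in> pos_roots Q \<xi> \<and> affine_root (cor \<beta>) k p * affine_root (cor \<beta>) k q < 0}"

lemma affine_root_in_affine_roots: "c \<in> cor ` Q \<Longrightarrow> affine_root c k \<in> affine_roots Q"
  by (auto simp: affine_roots_def)

lemma preserves_affine_roots_comp:
  assumes "preserves_affine_roots Q f" and "preserves_affine_roots Q g"
  shows "preserves_affine_roots Q (f \<circ> g)"
  using assms by (simp add: preserves_affine_roots_def flip: comp_assoc)

lemma affine_refl_eq:
  assumes "\<alpha> \<in> R"
  shows "affine_refl cor \<alpha> m x = x - affine_root (cor \<alpha>) (- m) x *\<^sub>R \<alpha>"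
proof -
  have e: "(x + of_int m *\<^sub>R \<alpha>) \<bullet> cor \<alpha> = affine_root (cor \<alpha>) (- m) x + of_int m"
    using root_coroot[OF assms] by (simp add: inner_add_left affine_root_def)
  have "affine_refl cor \<alpha> m x
      = (x + of_int m *\<^sub>R \<alpha>) - (affine_root (cor \<alpha>) (- m) x + of_int m) *\<^sub>R \<alpha>"
    by (simp only: affine_refl_def refl_def e)
  also have "\<dots> = x - affine_root (cor \<alpha>) (- m) x *\<^sub>R \<alpha>"
    by (simp add: algebra_simps)
  finally show ?thesis .
qed

lemma affine_root_affine_refl:
  assumes "\<alpha> \<in> R"
  shows "affine_root (cor \<alpha>) (- m) (affine_refl cor \<alpha> m x) = - affine_root (cor \<alpha>) (- m) x"
  using root_coroot[OF assms]
  by (simp add: affine_refl_eq[OF assms] affine_root_def inner_diff_left algebra_simps)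

lemma affine_refl_affine_refl:
  assumes "\<alpha> \<in> R"
  shows "affine_refl cor \<alpha> m (affine_refl cor \<alpha> m x) = x"
proof -
  have "affine_refl cor \<alpha> m (affine_refl cor \<alpha> m x)
      = affine_refl cor \<alpha> m x - affine_root (cor \<alpha>) (- m) (affine_refl cor \<alpha> m x) *\<^sub>R \<alpha>"
    by (rule affine_refl_eq[OF assms])
  also have "\<dots> = x"
    unfolding affine_root_affine_refl[OF assms] by (simp add: affine_refl_eq[OF assms])
  finally show ?thesis .
qed

lemma zero_in_lattice: "0 \<in> X"
  using datum by (auto simp: reduced_root_datum_def is_lattice_def intro: exI[of _ "\<lambda>_. 0"])

context
  fixes Q assumes Q: "closed_subsystem Q"
begin

lemma preserves_affine_roots_affine_refl:
  assumes "\<alpha> \<in> Q"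
  shows "preserves_affine_roots Q (affine_refl cor \<alpha> m)"
  unfolding preserves_affine_roots_def
proof
  fix f
  assume "f \<in> affine_roots Q"
  then obtain c k where f: "f = affine_root c k" and c: "c \<in> cor ` Q"
    by (auto simp: affine_roots_def)
  have c': "corefl cor \<alpha> c \<in> cor ` Q"
    using Q assms c by (rule closed_subsystem_corefl)
  obtain n where n: "\<alpha> \<bullet> corefl cor \<alpha> c = of_int n"
    using closed_subsystem_int[OF Q closed_subsystem_subset[OF Q assms] c'] .
  have "f \<circ> affine_refl cor \<alpha> m = affine_root (corefl cor \<alpha> c) (k - m * n)"
  proof (rule ext)
    fix x
    have "affine_refl cor \<alpha> m x \<bullet> c = (x + of_int m *\<^sub>R \<alpha>) \<bullet> corefl cor \<alpha> c"
      by (simp add: affine_refl_def inner_refl_eq_inner_corefl)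
    then show "(f \<circ> affine_refl cor \<alpha> m) x = affine_root (corefl cor \<alpha> c) (k - m * n) x"
      using n by (simp add: f affine_root_def inner_add_left)
  qed
  then show "f \<circ> affine_refl cor \<alpha> m \<in> affine_roots Q"
    using c' by (simp add: affine_root_in_affine_roots)
qed

lemma preserves_affine_roots_ext_affine_weyl:
  assumes "z \<in> ext_affine_weyl cor X Q"
  shows "preserves_affine_roots Q z"
  unfolding preserves_affine_roots_def
proof
  obtain l u where z: "z = (\<lambda>x. u x + l)" and l: "l \<in> X" and u: "u \<in> weyl_group cor Q"
    using assms by (auto simp: ext_affine_weyl_def)
  fix f
  assume "f \<in> affine_roots Q"
  then obtain c k where f: "f = affine_root c k" and c: "c \<in> cor ` Q"
    by (auto simp: affine_roots_def)
  obtain c' where c': "c' \<in> cor ` Q" "\<forall>x. u x \<bullet> c = x \<bullet> c'"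
    using weyl_group_transpose[OF Q u c] by blast
  have "l \<bullet> c \<in> \<int>"
    using lattice_coroot_int[OF l] c closed_subsystem_subset[OF Q] by blast
  then obtain n where n: "l \<bullet> c = of_int n"
    by (auto elim: Ints_cases)
  have "f \<circ> z = affine_root c' (k - n)"
    using c'(2) n by (simp add: fun_eq_iff f z affine_root_def inner_add_left)
  then show "f \<circ> z \<in> affine_roots Q"
    using c'(1) by (simp add: affine_root_in_affine_roots)
qed

lemma preserves_affine_roots_weyl:
  assumes "w \<in> weyl_group cor Q"
  shows "preserves_affine_roots Q w"
proof -
  have "(\<lambda>x. w x + 0) \<in> ext_affine_weyl cor X Q"
    unfolding ext_affine_weyl_def using assms zero_in_lattice by blast
  then show ?thesis
    using preserves_affine_roots_ext_affine_weyl by simp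
qed

lemma finite_separating_roots: "finite (separating_roots Q p q)"
proof (rule finite_subset)
  show "separating_roots Q p q
      \<subseteq> (\<Union>c\<in>cor ` Q. affine_root c ` {k. (p \<bullet> c - of_int k) * (q \<bullet> c - of_int k) < 0})"
  proof
    fix f
    assume "f \<in> separating_roots Q p q"
    then obtain c k where "c \<in> cor ` Q" "f = affine_root c k"
      and "(p \<bullet> c - of_int k) * (q \<bullet> c - of_int k) < 0"
      by (auto simp: separating_roots_def affine_roots_def affine_root_def)
    then show "f \<in> (\<Union>c\<in>cor ` Q. affine_root c ` {k. (p \<bullet> c - of_int k) * (q \<bullet> c - of_int k) < 0})"
      by blast
  qed
  have "finite (cor ` Q)"
    using Q finite_roots by (auto simp: closed_subsystem_def intro: finite_subset)
  then show "finite (\<Union>c\<in>cor ` Q. affine_root c ` {k. (p \<bullet> c - of_int k) * (q \<bullet> c - of_int k) < 0})"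
    using finite_ints_between by blast
qed

lemma card_separating_roots_image:
  assumes g: "preserves_affine_roots Q g" and g': "preserves_affine_roots Q (inv g)" and "bij g"
  shows "card (separating_roots Q (g p) (g q)) = card (separating_roots Q p q)"
proof (rule bij_betw_same_card)
  have gg: "g \<circ> inv g = id" "inv g \<circ> g = id"
    using surj_iff[THEN iffD1, OF bij_is_surj] inj_iff[THEN iffD1, OF bij_is_inj] assms(3) by blast+
  show "bij_betw (\<lambda>f. f \<circ> g) (separating_roots Q (g p) (g q)) (separating_roots Q p q)"
  proof (rule bij_betw_byWitness[where f' = "\<lambda>f. f \<circ> inv g"])
    show "\<forall>f\<in>separating_roots Q (g p) (g q). f \<circ> g \<circ> inv g = f"
      "\<forall>f\<in>separating_roots Q p q. f \<circ> inv g \<circ> g = f"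
      using gg by (simp_all add: comp_assoc)
    show "(\<lambda>f. f \<circ> g) ` separating_roots Q (g p) (g q) \<subseteq> separating_roots Q p q"
      using g by (auto simp: separating_roots_def preserves_affine_roots_def)
    show "(\<lambda>f. f \<circ> inv g) ` separating_roots Q p q \<subseteq> separating_roots Q (g p) (g q)"
      using g' pointfree_idE[OF gg(2)] by (auto simp: separating_roots_def preserves_affine_roots_def)
  qed
qed

lemma card_separating_roots_affine_refl:
  assumes "\<alpha> \<in> Q" and "0 < affine_root (cor \<alpha>) (- m) p * affine_root (cor \<alpha>) (- m) q"
  shows "card (separating_roots Q p q) + 2 \<le> card (separating_roots Q p (affine_refl cor \<alpha> m q))"
  unfolding separating_roots_def
proof (rule card_sign_changes_reflection[where h = "affine_root (cor \<alpha>) (- m)"])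
  have \<alpha>: "\<alpha> \<in> R"
    using Q assms(1) by (rule closed_subsystem_subset)
  show "f \<circ> affine_refl cor \<alpha> m \<in> affine_roots Q" if "f \<in> affine_roots Q" for f
    using preserves_affine_roots_affine_refl[OF assms(1)] that by (simp add: preserves_affine_roots_def)
  show "affine_refl cor \<alpha> m (affine_refl cor \<alpha> m x) = x" for x
    using \<alpha> by (rule affine_refl_affine_refl)
  show "affine_root (cor \<alpha>) (- m) \<in> affine_roots Q"
    using assms(1) by (simp add: affine_root_in_affine_roots)
  have "- cor \<alpha> \<in> cor ` Q"
    using Q assms(1) by (simp add: closed_subsystem_uminus_coroot)
  then show "(\<lambda>x. - affine_root (cor \<alpha>) (- m) x) \<in> affine_roots Q"
    by (simp add: affine_root_uminus affine_root_in_affine_roots)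
  show "affine_root (cor \<alpha>) (- m) (affine_refl cor \<alpha> m x) = - affine_root (cor \<alpha>) (- m) x" for x
    using \<alpha> by (rule affine_root_affine_refl)
  show "\<exists>t. \<forall>x. f (affine_refl cor \<alpha> m x) = f x - t * affine_root (cor \<alpha>) (- m) x"
    if f: "f \<in> affine_roots Q" for f
  proof -
    obtain c k where "f = affine_root c k"
      using f by (auto simp: affine_roots_def)
    then have "\<forall>x. f (affine_refl cor \<alpha> m x) = f x - (\<alpha> \<bullet> c) * affine_root (cor \<alpha>) (- m) x"
      by (simp add: affine_refl_eq[OF \<alpha>] affine_root_def[of c] inner_diff_left)
    then show ?thesis
      by blast
  qed
  show "finite {f \<in> affine_roots Q. f p * f (affine_refl cor \<alpha> m q) < 0}"
    using finite_separating_roots by (simp add: separating_roots_def)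
qed (rule assms(2))

lemma card_separating_roots_affine_refl_less_iff:
  assumes "\<alpha> \<in> Q"
    and "affine_root (cor \<alpha>) (- m) p \<noteq> 0" and "affine_root (cor \<alpha>) (- m) q \<noteq> 0"
  shows "card (separating_roots Q p q) < card (separating_roots Q p (affine_refl cor \<alpha> m q))
    \<longleftrightarrow> 0 < affine_root (cor \<alpha>) (- m) p * affine_root (cor \<alpha>) (- m) q"
proof
  assume "0 < affine_root (cor \<alpha>) (- m) p * affine_root (cor \<alpha>) (- m) q"
  then show "card (separating_roots Q p q) < card (separating_roots Q p (affine_refl cor \<alpha> m q))"
    using card_separating_roots_affine_refl[OF assms(1)] by fastforce
next
  assume less: "card (separating_roots Q p q) < card (separating_roots Q p (affine_refl cor \<alpha> m q))"
  have \<alpha>: "\<alpha> \<in> R"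
    using Q assms(1) by (rule closed_subsystem_subset)
  show "0 < affine_root (cor \<alpha>) (- m) p * affine_root (cor \<alpha>) (- m) q"
  proof (rule ccontr)
    assume "\<not> ?thesis"
    then have "affine_root (cor \<alpha>) (- m) p * affine_root (cor \<alpha>) (- m) q < 0"
      using assms(2,3) by (simp add: linorder_not_less le_less)
    then have "0 < affine_root (cor \<alpha>) (- m) p * affine_root (cor \<alpha>) (- m) (affine_refl cor \<alpha> m q)"
      by (simp add: affine_root_affine_refl[OF \<alpha>])
    from card_separating_roots_affine_refl[OF assms(1) this] less show False
      by (simp add: affine_refl_affine_refl[OF \<alpha>])
  qed
qed

end

context
  fixes Q and \<xi> :: 'v
  assumes Q: "closed_subsystem Q" and reg: "\<forall>\<beta>\<in>Q. \<beta> \<bullet> \<xi> \<noteq> 0"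
begin

lemma uminus_pos_roots:
  assumes "\<gamma> \<in> Q" and "\<not> 0 < \<gamma> \<bullet> \<xi>"
  shows "- \<gamma> \<in> pos_roots Q \<xi>"
  using assms reg closed_subsystem_uminus[OF Q assms(1)] by (force simp: pos_roots_def)

lemma cor_pos_roots_neq_uminus:
  assumes \<beta>: "\<beta> \<in> pos_roots Q \<xi>" and \<beta>': "\<beta>' \<in> pos_roots Q \<xi>"
  shows "cor \<beta> \<noteq> - cor \<beta>'"
proof
  assume eq: "cor \<beta> = - cor \<beta>'"
  have "\<beta> \<in> R" "\<beta>' \<in> R" "- \<beta>' \<in> R"
    using \<beta> \<beta>' closed_subsystem_subset[OF Q] closed_subsystem_uminus[OF Q] by (auto simp: pos_roots_def)
  moreover from this have "cor \<beta> = cor (- \<beta>')"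
    using eq cor_uminus by simp
  ultimately have "\<beta> = - \<beta>'"
    using inj_on_cor by (auto dest: inj_onD)
  then show False
    using \<beta> \<beta>' by (simp add: pos_roots_def)
qed

lemma base_alcove_coroot_bounds:
  assumes x: "x \<in> base_alcove cor (pos_roots Q \<xi>)" and \<gamma>: "\<gamma> \<in> Q"
  shows "if 0 < \<gamma> \<bullet> \<xi> then 0 < x \<bullet> cor \<gamma> \<and> x \<bullet> cor \<gamma> < 1 else -1 < x \<bullet> cor \<gamma> \<and> x \<bullet> cor \<gamma> < 0"
proof (cases "0 < \<gamma> \<bullet> \<xi>")
  case True
  then have "\<gamma> \<in> pos_roots Q \<xi>"
    using \<gamma> by (simp add: pos_roots_def)
  then show ?thesis
    using x True by (simp add: base_alcove_def)
next
  case False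
  then have "- \<gamma> \<in> pos_roots Q \<xi>"
    by (rule uminus_pos_roots[OF \<gamma>])
  moreover have "cor (- \<gamma>) = - cor \<gamma>"
    using cor_uminus closed_subsystem_subset[OF Q \<gamma>] by simp
  ultimately show ?thesis
    using x False by (fastforce simp: base_alcove_def)
qed

lemma affine_root_sign_base_alcove:
  assumes x: "x \<in> base_alcove cor (pos_roots Q \<xi>)" and y: "y \<in> base_alcove cor (pos_roots Q \<xi>)"
    and f: "f \<in> affine_roots Q"
  shows "0 < f x * f y"
proof -
  obtain \<gamma> k where f: "f = affine_root (cor \<gamma>) k" and \<gamma>: "\<gamma> \<in> Q"
    using assms(3) by (auto simp: affine_roots_def)
  define n :: int where "n = (if 0 < \<gamma> \<bullet> \<xi> then 0 else -1)"
  have "of_int n < z \<bullet> cor \<gamma> \<and> z \<bullet> cor \<gamma> < of_int n + 1"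
    if "z \<in> base_alcove cor (pos_roots Q \<xi>)" for z
    using base_alcove_coroot_bounds[OF that \<gamma>] by (simp add: n_def split: if_splits)
  then show ?thesis
    unfolding f affine_root_def using x y by (blast intro: mult_pos_in_unit_interval)
qed

lemma affine_root_nonzero_base_alcove:
  assumes "x \<in> base_alcove cor (pos_roots Q \<xi>)" and "f \<in> affine_roots Q"
  shows "f x \<noteq> 0"
  using affine_root_sign_base_alcove[OF assms(1) assms] by auto

lemma alcove_length_eq_card:
  assumes a: "a \<in> base_alcove cor (pos_roots Q \<xi>)" and g: "preserves_affine_roots Q g"
  shows "alcove_length cor (pos_roots Q \<xi>) g = card (separating_walls Q \<xi> a (g a))"
proof -
  let ?A = "base_alcove cor (pos_roots Q \<xi>)"
  have "separates cor ?A (g ` ?A) \<beta> k \<longleftrightarrow> affine_root (cor \<beta>) k a * affine_root (cor \<beta>) k (g a) < 0"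
    if \<beta>: "\<beta> \<in> pos_roots Q \<xi>" for \<beta> k
  proof
    assume "affine_root (cor \<beta>) k a * affine_root (cor \<beta>) k (g a) < 0"
    then show "separates cor ?A (g ` ?A) \<beta> k"
      using a by (auto simp: separates_def affine_root_def)
  next
    assume "separates cor ?A (g ` ?A) \<beta> k"
    then obtain x y where x: "x \<in> ?A" and y: "y \<in> ?A"
      and xy: "affine_root (cor \<beta>) k x * affine_root (cor \<beta>) k (g y) < 0"
      by (auto simp: separates_def affine_root_def)
    have f: "affine_root (cor \<beta>) k \<in> affine_roots Q"
      using \<beta> by (auto simp: pos_roots_def intro: affine_root_in_affine_roots)
    then have "affine_root (cor \<beta>) k \<circ> g \<in> affine_roots Q"
      using g by (simp add: preserves_affine_roots_def)
    from affine_root_sign_base_alcove[OF y a this]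
    have "0 < affine_root (cor \<beta>) k (g y) * affine_root (cor \<beta>) k (g a)"
      by simp
    moreover have "0 < affine_root (cor \<beta>) k x * affine_root (cor \<beta>) k a"
      using affine_root_sign_base_alcove[OF x a f] .
    ultimately show "affine_root (cor \<beta>) k a * affine_root (cor \<beta>) k (g a) < 0"
      using xy mult_neg_transfer by blast
  qed
  then show ?thesis
    unfolding alcove_length_def separating_walls_def by (intro arg_cong[where f = card]) auto
qed

lemma separating_roots_eq_Un:
  "separating_roots Q p q = (\<lambda>(\<beta>, k). affine_root (cor \<beta>) k) ` separating_walls Q \<xi> p q
    \<union> (\<lambda>(\<beta>, k). affine_root (- cor \<beta>) (- k)) ` separating_walls Q \<xi> p q"
  (is "_ = ?\<phi> ` ?P \<union> ?\<psi> ` ?P")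
proof
  show "?\<phi> ` ?P \<union> ?\<psi> ` ?P \<subseteq> separating_roots Q p q"
  proof
    fix f
    assume "f \<in> ?\<phi> ` ?P \<union> ?\<psi> ` ?P"
    then obtain \<beta> k where \<beta>: "(\<beta>, k) \<in> ?P" and f: "f = ?\<phi> (\<beta>, k) \<or> f = ?\<psi> (\<beta>, k)"
      by force
    have "cor \<beta> \<in> cor ` Q" "- cor \<beta> \<in> cor ` Q"
      using \<beta> closed_subsystem_uminus_coroot[OF Q] by (auto simp: separating_walls_def pos_roots_def)
    moreover have "affine_root (- cor \<beta>) (- k) x = - affine_root (cor \<beta>) k x" for x
      by (simp add: affine_root_def)
    ultimately show "f \<in> separating_roots Q p q"
      using f \<beta> by (auto simp: separating_roots_def separating_walls_def affine_root_in_affine_roots)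
  qed
  show "separating_roots Q p q \<subseteq> ?\<phi> ` ?P \<union> ?\<psi> ` ?P"
  proof
    fix f
    assume "f \<in> separating_roots Q p q"
    then obtain \<gamma> k where f: "f = affine_root (cor \<gamma>) k" and \<gamma>: "\<gamma> \<in> Q" and pq: "f p * f q < 0"
      by (auto simp: separating_roots_def affine_roots_def)
    show "f \<in> ?\<phi> ` ?P \<union> ?\<psi> ` ?P"
    proof (cases "0 < \<gamma> \<bullet> \<xi>")
      case True
      then have "(\<gamma>, k) \<in> ?P"
        using \<gamma> f pq by (simp add: separating_walls_def pos_roots_def)
      then show ?thesis
        using f by force
    next
      case False
      then have "- \<gamma> \<in> pos_roots Q \<xi>"
        by (rule uminus_pos_roots[OF \<gamma>])
      moreover have "affine_root (cor (- \<gamma>)) (- k) = (\<lambda>x. - f x)"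
        using cor_uminus closed_subsystem_subset[OF Q \<gamma>] by (simp add: f affine_root_uminus)
      ultimately have "(- \<gamma>, - k) \<in> ?P" and "f = ?\<psi> (- \<gamma>, - k)"
        using pq cor_uminus closed_subsystem_subset[OF Q \<gamma>] by (simp_all add: separating_walls_def f)
      then show ?thesis
        by blast
    qed
  qed
qed

lemma card_separating_roots_eq_double:
  "card (separating_roots Q p q) = 2 * card (separating_walls Q \<xi> p q)"
proof -
  define P where "P = separating_walls Q \<xi> p q"
  define \<phi> where "\<phi> = (\<lambda>(\<beta>, k). affine_root (cor \<beta>) k)"
  define \<psi> where "\<psi> = (\<lambda>(\<beta>, k). affine_root (- cor \<beta>) (- k))"
  have sep: "separating_roots Q p q = \<phi> ` P \<union> \<psi> ` P"
    unfolding P_def \<phi>_def \<psi>_def by (rule separating_roots_eq_Un)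
  have "\<beta> \<in> R" if "(\<beta>, k) \<in> P" for \<beta> k
    using that closed_subsystem_subset[OF Q] by (simp add: P_def separating_walls_def pos_roots_def)
  then have inj: "inj_on \<phi> P" "inj_on \<psi> P"
    using inj_on_cor by (auto simp: inj_on_def \<phi>_def \<psi>_def affine_root_eq_iff)
  have disj: "\<phi> ` P \<inter> \<psi> ` P = {}"
    using cor_pos_roots_neq_uminus
    by (fastforce simp: \<phi>_def \<psi>_def P_def separating_walls_def affine_root_eq_iff)
  have "finite (\<phi> ` P \<union> \<psi> ` P)"
    unfolding sep[symmetric] by (rule finite_separating_roots[OF Q])
  then have "card (separating_roots Q p q) = card (\<phi> ` P) + card (\<psi> ` P)"
    using sep disj card_Un_disjoint by (metis finite_Un)
  also have "\<dots> = 2 * card P"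
    using inj by (simp add: card_image)
  finally show ?thesis
    by (simp add: P_def)
qed

lemma two_alcove_length_eq_card:
  assumes "a \<in> base_alcove cor (pos_roots Q \<xi>)" and "preserves_affine_roots Q g"
  shows "2 * alcove_length cor (pos_roots Q \<xi>) g = card (separating_roots Q a (g a))"
  using alcove_length_eq_card[OF assms] card_separating_roots_eq_double by simp

lemma alcove_length_less_imp_same_side:
  assumes x: "x \<in> base_alcove cor (pos_roots Q \<xi>)" and \<alpha>: "\<alpha> \<in> Q"
    and z: "preserves_affine_roots Q z"
    and less: "alcove_length cor (pos_roots Q \<xi>) z
      < alcove_length cor (pos_roots Q \<xi>) (affine_refl cor \<alpha> m \<circ> z)"
  shows "0 < affine_root (cor \<alpha>) (- m) x * affine_root (cor \<alpha>) (- m) (z x)"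
proof -
  have "affine_root (cor \<alpha>) (- m) \<in> affine_roots Q"
    using \<alpha> by (simp add: affine_root_in_affine_roots)
  moreover have "affine_root (cor \<alpha>) (- m) \<circ> z \<in> affine_roots Q"
    using z calculation by (simp add: preserves_affine_roots_def)
  ultimately have "affine_root (cor \<alpha>) (- m) x \<noteq> 0" "(affine_root (cor \<alpha>) (- m) \<circ> z) x \<noteq> 0"
    using affine_root_nonzero_base_alcove[OF x] by blast+
  moreover have "preserves_affine_roots Q (affine_refl cor \<alpha> m \<circ> z)"
    using preserves_affine_roots_comp preserves_affine_roots_affine_refl[OF Q \<alpha>] z by blast
  from two_alcove_length_eq_card[OF x this] two_alcove_length_eq_card[OF x z]
  have "card (separating_roots Q x (z x)) < card (separating_roots Q x (affine_refl cor \<alpha> m (z x)))"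
    using less by simp
  ultimately show ?thesis
    using card_separating_roots_affine_refl_less_iff[OF Q \<alpha>] by simp
qed

end

lemma base_alcove_nonempty:
  assumes "\<forall>\<beta>\<in>R. \<beta> \<bullet> \<xi> \<noteq> 0"
  obtains a where "a \<in> base_alcove cor (pos_roots R \<xi>)"
proof -
  define P where "P = pos_roots R \<xi>"
  \<comment> \<open>x0 is the image of \<xi> under the W-invariant form; it pairs positively with exactly
    the positive coroots.\<close>
  define x0 where "x0 = (\<Sum>\<gamma>\<in>R. (\<xi> \<bullet> \<gamma>) *\<^sub>R \<gamma>)"
  have pos: "0 < x0 \<bullet> cor \<beta>" if "\<beta> \<in> P" for \<beta>
  proof -
    have \<beta>: "\<beta> \<in> R" "0 < \<xi> \<bullet> \<beta>"
      using that by (auto simp: P_def pos_roots_def inner_commute)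
    have "(\<lambda>c. c - (cor \<beta> \<bullet> c) *\<^sub>R \<beta>) ` R = R"
      using refl_roots[OF \<beta>(1)] by (simp add: refl_def inner_commute)
    then have "0 < \<xi> \<bullet> \<beta> \<longleftrightarrow> 0 < (\<Sum>\<gamma>\<in>R. (\<xi> \<bullet> \<gamma>) * (cor \<beta> \<bullet> \<gamma>))"
      by (rule reflection_invariant_form_sign[OF finite_roots \<beta>(1) root_coroot[OF \<beta>(1)]])
    moreover have "x0 \<bullet> cor \<beta> = (\<Sum>\<gamma>\<in>R. (\<xi> \<bullet> \<gamma>) * (cor \<beta> \<bullet> \<gamma>))"
      unfolding x0_def inner_sum_left inner_scaleR_left by (intro sum.cong refl) (simp add: inner_commute)
    ultimately show ?thesis
      using \<beta>(2) by simp
  qed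
  define D where "D = 1 + (\<Sum>\<beta>\<in>P. x0 \<bullet> cor \<beta>)"
  have "finite P"
    using finite_roots by (simp add: P_def pos_roots_def)
  have "0 < x0 \<bullet> cor \<beta> / D \<and> x0 \<bullet> cor \<beta> / D < 1" if "\<beta> \<in> P" for \<beta>
  proof -
    have "x0 \<bullet> cor \<beta> \<le> (\<Sum>\<beta>\<in>P. x0 \<bullet> cor \<beta>)"
      using pos by (intro member_le_sum[OF that _ \<open>finite P\<close>]) (simp add: less_imp_le)
    then show ?thesis
      using pos[OF that] by (simp add: D_def)
  qed
  then have "(1 / D) *\<^sub>R x0 \<in> base_alcove cor P"
    by (simp add: base_alcove_def)
  then show ?thesis
    using that by (simp add: P_def)
qed

lemma two_alcove_length_conj_eq_card:
  assumes reg: "\<forall>\<beta>\<in>R. \<beta> \<bullet> \<xi> \<noteq> 0" and a: "a \<in> base_alcove cor (pos_roots R \<xi>)"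
    and w: "w \<in> weyl_group cor R" and g: "preserves_affine_roots R g"
  shows "2 * alcove_length cor (pos_roots R \<xi>) (inv w \<circ> g \<circ> w) = card (separating_roots R (w a) (g (w a)))"
proof -
  have R: "closed_subsystem R"
    by (rule closed_subsystem_roots)
  have w': "bij w" "inv w \<in> weyl_group cor R"
    using weyl_group_bij_inv[OF R w] by auto
  have pw: "preserves_affine_roots R w" "preserves_affine_roots R (inv w)"
    using preserves_affine_roots_weyl[OF R] w w'(2) by auto
  have "2 * alcove_length cor (pos_roots R \<xi>) (inv w \<circ> g \<circ> w) = card (separating_roots R a (inv w (g (w a))))"
    using two_alcove_length_eq_card[OF R reg a] preserves_affine_roots_comp pw g by simp
  also have "\<dots> = card (separating_roots R (w a) (w (inv w (g (w a)))))"
    using card_separating_roots_image[OF R pw w'(1)] by simp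
  also have "w (inv w (g (w a))) = g (w a)"
    using w'(1) by (simp add: bij_is_surj surj_f_inv_f)
  finally show ?thesis .
qed

lemma coroot_sign_eq_root_sign: "\<exists>y. \<forall>\<beta>\<in>R. 0 < x \<bullet> cor \<beta> \<longleftrightarrow> 0 < \<beta> \<bullet> y"
proof -
  define y where "y = (\<Sum>c\<in>cor ` R. (x \<bullet> c) *\<^sub>R c)"
  have "0 < x \<bullet> cor \<beta> \<longleftrightarrow> 0 < \<beta> \<bullet> y" if "\<beta> \<in> R" for \<beta>
  proof -
    have "(\<lambda>c. c - (\<beta> \<bullet> c) *\<^sub>R cor \<beta>) ` cor ` R = cor ` R"
      using corefl_coroots[OF that] by (simp add: corefl_def)
    moreover have "cor \<beta> \<bullet> \<beta> = 2"
      using root_coroot[OF that] by (simp add: inner_commute)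
    moreover have "finite (cor ` R)" "cor \<beta> \<in> cor ` R"
      using finite_roots that by simp_all
    ultimately have "0 < x \<bullet> cor \<beta> \<longleftrightarrow> 0 < (\<Sum>c\<in>cor ` R. (x \<bullet> c) * (\<beta> \<bullet> c))"
      using reflection_invariant_form_sign[of "cor ` R" "cor \<beta>" \<beta> x] by simp
    moreover have "\<beta> \<bullet> y = (\<Sum>c\<in>cor ` R. (x \<bullet> c) * (\<beta> \<bullet> c))"
      by (simp add: y_def inner_sum_right)
    ultimately show ?thesis
      by simp
  qed
  then show ?thesis
    by blast
qed

lemma coroot_positive_of_simple:
  assumes Q: "closed_subsystem Q"
    and simple: "\<forall>\<beta>\<in>simple_roots (pos_roots Q \<xi>). 0 < x \<bullet> cor \<beta>"
    and \<gamma>: "\<gamma> \<in> pos_roots Q \<xi>"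
  shows "0 < x \<bullet> cor \<gamma>"
proof -
  obtain y where y: "\<forall>\<beta>\<in>R. 0 < x \<bullet> cor \<beta> \<longleftrightarrow> 0 < \<beta> \<bullet> y"
    using coroot_sign_eq_root_sign by blast
  have QR: "pos_roots Q \<xi> \<subseteq> R"
    using closed_subsystem_subset[OF Q] by (auto simp: pos_roots_def)
  have "0 < \<gamma> \<bullet> y"
  proof (rule positive_on_simple_roots)
    show "finite (pos_roots Q \<xi>)"
      using QR finite_roots by (rule finite_subset)
    show "\<forall>\<beta>\<in>pos_roots Q \<xi>. 0 < \<beta> \<bullet> \<xi>"
      by (simp add: pos_roots_def)
    show "\<forall>\<beta>\<in>simple_roots (pos_roots Q \<xi>). 0 < \<beta> \<bullet> y"
      using simple y QR by (auto simp: simple_roots_def)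
  qed (rule \<gamma>)
  then show ?thesis
    using y QR \<gamma> by blast
qed

lemma coroot_positive_of_alcove_length_less:
  assumes reg: "\<forall>\<beta>\<in>R. \<beta> \<bullet> \<xi> \<noteq> 0" and a: "a \<in> base_alcove cor (pos_roots R \<xi>)"
    and w: "w \<in> weyl_group cor R" and \<beta>: "\<beta> \<in> pos_roots R \<xi>"
    and less: "alcove_length cor (pos_roots R \<xi>) w < alcove_length cor (pos_roots R \<xi>) (refl cor \<beta> \<circ> w)"
  shows "0 < w a \<bullet> cor \<beta>"
proof -
  have R: "closed_subsystem R"
    by (rule closed_subsystem_roots)
  have "affine_refl cor \<beta> 0 \<circ> w = refl cor \<beta> \<circ> w"
    by (simp add: affine_refl_def fun_eq_iff)
  then have "0 < affine_root (cor \<beta>) 0 a * affine_root (cor \<beta>) 0 (w a)"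
    using alcove_length_less_imp_same_side[OF R reg a _ preserves_affine_roots_weyl[OF R w], of \<beta> 0] \<beta> less
    by (simp add: pos_roots_def)
  moreover have "0 < affine_root (cor \<beta>) 0 a"
    using a \<beta> by (simp add: base_alcove_def affine_root_def)
  ultimately show ?thesis
    by (simp add: affine_root_def zero_less_mult_iff)
qed

lemma base_alcove_min_coset_rep:
  assumes Q: "closed_subsystem Q" and reg: "\<forall>\<beta>\<in>R. \<beta> \<bullet> \<xi> \<noteq> 0"
    and a: "a \<in> base_alcove cor (pos_roots R \<xi>)" and w: "w \<in> weyl_group cor R"
    and min: "\<forall>\<beta>\<in>simple_roots (pos_roots Q \<xi>).
      alcove_length cor (pos_roots R \<xi>) w < alcove_length cor (pos_roots R \<xi>) (refl cor \<beta> \<circ> w)"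
  shows "w a \<in> base_alcove cor (pos_roots Q \<xi>)"
proof -
  have QR: "pos_roots Q \<xi> \<subseteq> pos_roots R \<xi>"
    using closed_subsystem_subset[OF Q] by (auto simp: pos_roots_def)
  have "\<forall>\<beta>\<in>simple_roots (pos_roots Q \<xi>). 0 < w a \<bullet> cor \<beta>"
    using min QR coroot_positive_of_alcove_length_less[OF reg a w] by (auto simp: simple_roots_def)
  then have pos: "0 < w a \<bullet> cor \<gamma>" if "\<gamma> \<in> pos_roots Q \<xi>" for \<gamma>
    using coroot_positive_of_simple[OF Q _ that] by blast
  have less_one: "w a \<bullet> cor \<gamma> < 1" if \<gamma>: "\<gamma> \<in> pos_roots Q \<xi>" for \<gamma>
  proof -
    have "\<gamma> \<in> R"
      using QR \<gamma> by (auto simp: pos_roots_def)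
    then obtain c' where c': "c' \<in> cor ` R" "\<forall>x. w x \<bullet> cor \<gamma> = x \<bullet> c'"
      using weyl_group_transpose[OF closed_subsystem_roots w] by blast
    then obtain \<gamma>' where \<gamma>': "\<gamma>' \<in> R" "c' = cor \<gamma>'"
      by blast
    then have "a \<bullet> c' < 1"
      using base_alcove_coroot_bounds[OF closed_subsystem_roots reg a \<gamma>'(1)] by (simp split: if_splits)
    then show ?thesis
      using c'(2) by simp
  qed
  show ?thesis
    using pos less_one by (simp add: base_alcove_def)
qed

end

theorem mainTheorem13:
  fixes X R S :: "'v::euclidean_space set" and cor :: "'v \<Rightarrow> 'v" and \<xi> :: 'v
    and z w :: "'v \<Rightarrow> 'v" and \<alpha> :: 'v and m :: int
  assumes datum: "reduced_root_datum X R cor"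
    and regular: "\<forall>\<beta>\<in>R. \<beta> \<bullet> \<xi> \<noteq> 0"
    and z: "z \<in> ext_affine_weyl cor X (levi_roots R S)"
    and \<alpha>: "\<alpha> \<in> levi_roots R S"
    and len: "alcove_length cor (pos_roots (levi_roots R S) \<xi>) z
              < alcove_length cor (pos_roots (levi_roots R S) \<xi>) (affine_refl cor \<alpha> m \<circ> z)"
    and w: "w \<in> weyl_group cor R"
    and wM: "\<forall>\<beta>\<in>simple_roots (pos_roots (levi_roots R S) \<xi>).
               alcove_length cor (pos_roots R \<xi>) w < alcove_length cor (pos_roots R \<xi>) (refl cor \<beta> \<circ> w)"
  shows "alcove_length cor (pos_roots R \<xi>) (inv w \<circ> z \<circ> w)
         < alcove_length cor (pos_roots R \<xi>) (inv w \<circ> (affine_refl cor \<alpha> m \<circ> z) \<circ> w)"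
proof -
  interpret root_datum X R cor
    by (rule root_datum.intro[OF datum])
  let ?M = "levi_roots R S" and ?r = "affine_refl cor \<alpha> m"
  have M: "closed_subsystem ?M" and R: "closed_subsystem R"
    by (rule closed_subsystem_levi_roots, rule closed_subsystem_roots)
  have MR: "?M \<subseteq> R" and regM: "\<forall>\<beta>\<in>?M. \<beta> \<bullet> \<xi> \<noteq> 0"
    using regular by (auto simp: levi_roots_def)
  obtain a where a: "a \<in> base_alcove cor (pos_roots R \<xi>)"
    using base_alcove_nonempty[OF regular] .
  have wa: "w a \<in> base_alcove cor (pos_roots ?M \<xi>)"
    by (rule base_alcove_min_coset_rep[OF M regular a w wM])
  have zM: "preserves_affine_roots ?M z"
    by (rule preserves_affine_roots_ext_affine_weyl[OF M z])
  have zR: "preserves_affine_roots R z"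
    by (rule preserves_affine_roots_ext_affine_weyl[OF R ext_affine_weyl_mono[OF MR z]])
  then have rzR: "preserves_affine_roots R (?r \<circ> z)"
    using preserves_affine_roots_comp preserves_affine_roots_affine_refl[OF R] MR \<alpha> by blast
  have "0 < affine_root (cor \<alpha>) (- m) (w a) * affine_root (cor \<alpha>) (- m) (z (w a))"
    by (rule alcove_length_less_imp_same_side[OF M regM wa \<alpha> zM len])
  then have "card (separating_roots R (w a) (z (w a))) + 2 \<le> card (separating_roots R (w a) (?r (z (w a))))"
    using card_separating_roots_affine_refl[OF R] MR \<alpha> by blast
  then show ?thesis
    using two_alcove_length_conj_eq_card[OF regular a w zR] two_alcove_length_conj_eq_card[OF regular a w rzR] by simp
qed

end
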